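(* For any groupcast index coding problem, the optimal broadcast rate satisfies $\beta\le\beta_{IUPM}$, where $\beta_{IUPM}$ is the independent user partition multicast rate defined in the context.
   Context: GIC problem: there are $m$ packets $x_1,\dots,x_m$, each a binary string of length $t$. For each $i\in[m]$ there is a nonempty set $U_i=\{u_i^1,\dots,u_i^{|U_i|}\}$ of users demanding $x_i$, $U=\bigcup_i U_i$; user $u_i^j$ knows the packets $x_{i'}$, $i'\in A_i^j$, where $A_i^j\subseteq[m]\setminus\{i\}$. An index code of length $r$ for packet length $t$ consists of an encoder $\phi:(\{0,1\}^t)^m\to\{0,1\}^r$ and, for each user $u_i^j$, a decoder $\psi_i^j$ mapping $\phi(x_1,\dots,x_m)$ together with $(x_{i'})_{i'\in A_i^j}$ to $x_i$, correctly for all packet values. The optimal broadcast rate is $\beta=\inf_t\inf r/t$, the inner infimum over all index codes for packet length $t$. IUPM rate: take a partition of $U$ into nonempty disjoint sets $W_1,\dots,W_h$ ($1\le h\le m$), with $Y_e=\{i: u_i^j\in W_e\text{ for some } j\}$, $c_e=\min\{|A_i^j\cap Y_e|: u_i^j\in W_e\}$ and $b_e=|Y_e|-c_e$. Let $\mathbb{F}=GF(2^s)$ for some $s\ge1$, with packets viewed (when $s\mid t$) as vectors in $\mathbb{F}^{t/s}$ and linear combinations taken componentwise. A valid coefficient choice consists, for each $e\in[h]$, of $b_e$ vectors $\alpha\in\mathbb{F}^m$ with $\alpha_i=0$ for $i\notin Y_e$, such that every user $u_i^j\in W_e$ can recover $x_i$ from the $b_e$ combinations $\sum_{i'}\alpha_{i'}x_{i'}$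 together with its side information (e.g. the combinations of a $(|Y_e|,b_e)$ MDS code on the packets of $Y_e$). Let $\mathbf N$ be the matrix whose rows are all $\sum_e b_e$ of these vectors. The IUPM rate of the partition is the minimum of $\operatorname{rank}\mathbf N$ over $s$ and all valid coefficient choices, and $\beta_{IUPM}$ is the minimum of this over all user partitions. *)

theory Defs
  imports "HOL-Library.FuncSet" "Jordan_Normal_Form.DL_Rank"
begin

text \<open>A groupcast index coding (GIC) problem with m packets, indexed 0..m-1.
  Users are elements of a finite set U; user u demands packet dem u and knows
  the packets with indices in side u.\<close>
definition gic :: "nat \<Rightarrow> 'u set \<Rightarrow> ('u \<Rightarrow> nat) \<Rightarrow> ('u \<Rightarrow> nat set) \<Rightarrow> bool" where
  "gic m U dem side \<longleftrightarrow> finite U \<and>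
     (\<forall>u\<in>U. dem u < m \<and> side u \<subseteq> {..<m} - {dem u}) \<and>
     (\<forall>i<m. \<exists>u\<in>U. dem u = i)"

definition packets :: "nat \<Rightarrow> nat \<Rightarrow> (nat \<Rightarrow> bool list) set" where
  "packets m t = ({..<m} \<rightarrow>\<^sub>E {bs. length bs = t})"

definition is_index_code ::
  "nat \<Rightarrow> 'u set \<Rightarrow> ('u \<Rightarrow> nat) \<Rightarrow> ('u \<Rightarrow> nat set) \<Rightarrow> nat \<Rightarrow> nat
   \<Rightarrow> ((nat \<Rightarrow> bool list) \<Rightarrow> bool list)
   \<Rightarrow> ('u \<Rightarrow> bool list \<Rightarrow> (nat \<Rightarrow> bool list) \<Rightarrow> bool list) \<Rightarrow> bool" where
  "is_index_code m U dem side t r phi psi \<longleftrightarrow>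
     (\<forall>x\<in>packets m t. length (phi x) = r) \<and>
     (\<forall>u\<in>U. \<forall>x\<in>packets m t. psi u (phi x) (restrict x (side u)) = x (dem u))"

definition has_index_code ::
  "nat \<Rightarrow> 'u set \<Rightarrow> ('u \<Rightarrow> nat) \<Rightarrow> ('u \<Rightarrow> nat set) \<Rightarrow> nat \<Rightarrow> nat \<Rightarrow> bool" where
  "has_index_code m U dem side t r \<longleftrightarrow> (\<exists>phi psi. is_index_code m U dem side t r phi psi)"

definition broadcast_rate :: "nat \<Rightarrow> 'u set \<Rightarrow> ('u \<Rightarrow> nat) \<Rightarrow> ('u \<Rightarrow> nat set) \<Rightarrow> real" where
  "broadcast_rate m U dem side =
     Inf {real r / real t | t r. t > 0 \<and> has_index_code m U dem side t r}"

definition user_partition :: "nat \<Rightarrow> 'u set \<Rightarrow> nat \<Rightarrow> (nat \<Rightarrow> 'u set) \<Rightarrow> bool" where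
  "user_partition m U h W \<longleftrightarrow> 1 \<le> h \<and> h \<le> m \<and>
     (\<forall>e<h. W e \<noteq> {}) \<and>
     (\<forall>e<h. \<forall>e'<h. e \<noteq> e' \<longrightarrow> W e \<inter> W e' = {}) \<and>
     (\<Union>e<h. W e) = U"

definition Yset :: "('u \<Rightarrow> nat) \<Rightarrow> 'u set \<Rightarrow> nat set" where
  "Yset dem We = dem ` We"

definition cval :: "('u \<Rightarrow> nat) \<Rightarrow> ('u \<Rightarrow> nat set) \<Rightarrow> 'u set \<Rightarrow> nat" where
  "cval dem side We = Min ((\<lambda>u. card (side u \<inter> Yset dem We)) ` We)"

definition bval :: "('u \<Rightarrow> nat) \<Rightarrow> ('u \<Rightarrow> nat set) \<Rightarrow> 'u set \<Rightarrow> nat" where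
  "bval dem side We = card (Yset dem We) - cval dem side We"

text \<open>Valid coefficient choice over a field 'f: coef e k is the k-th coefficient vector
  (k < b_e) of group e, given as a function on packet indices 0..m-1.  It must vanish
  outside Y_e, and every user of W_e must be able to recover its demanded packet from
  the b_e linear combinations together with its side information.\<close>
definition valid_coefs ::
  "nat \<Rightarrow> 'u set \<Rightarrow> ('u \<Rightarrow> nat) \<Rightarrow> ('u \<Rightarrow> nat set) \<Rightarrow> nat \<Rightarrow> (nat \<Rightarrow> 'u set)
   \<Rightarrow> (nat \<Rightarrow> nat \<Rightarrow> nat \<Rightarrow> 'f::field) \<Rightarrow> bool" where
  "valid_coefs m U dem side h W coef \<longleftrightarrow>
     (\<forall>e<h. \<forall>k<bval dem side (W e). \<forall>i<m. i \<notin> Yset dem (W e) \<longrightarrow> coef e k i = 0) \<and>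
     (\<forall>e<h. \<forall>u\<in>W e. \<exists>dec :: (nat \<Rightarrow> 'f) \<Rightarrow> (nat \<Rightarrow> 'f) \<Rightarrow> 'f.
        \<forall>x \<in> {..<m} \<rightarrow>\<^sub>E (UNIV :: 'f set).
          dec (\<lambda>k\<in>{..<bval dem side (W e)}. \<Sum>i<m. coef e k i * x i)
              (restrict x (side u)) = x (dem u))"

definition coef_matrix ::
  "nat \<Rightarrow> ('u \<Rightarrow> nat) \<Rightarrow> ('u \<Rightarrow> nat set) \<Rightarrow> nat \<Rightarrow> (nat \<Rightarrow> 'u set)
   \<Rightarrow> (nat \<Rightarrow> nat \<Rightarrow> nat \<Rightarrow> 'f::field) \<Rightarrow> 'f mat" where
  "coef_matrix m dem side h W coef =
     mat_of_rows m (concat (map (\<lambda>e. map (\<lambda>k. vec m (coef e k)) [0..<bval dem side (W e)]) [0..<h]))"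

definition matrix_rank :: "'f::field mat \<Rightarrow> nat" where
  "matrix_rank N = vec_space.rank (dim_row N) N"

end

theory Submission
  imports Defs
begin

(* Over a field F with 2^s elements, broadcast N x, where N stacks the coefficient vectors of
   all groups.  Every row of N is one of the combinations sent to some group, so a user in W_e
   reads off its group's b_e combinations from N x and decodes with its side information.
   The vector N x lies in the column space of N, which has |F|^rank N = 2^(s rank N) elements,
   so it fits into s rank N bits; identifying s-bit packets with field elements gives an index
   code of rate s rank N / s = rank N. *)

lemma (in Module.module) card_span_le:
  assumes S: "finite S" "S \<subseteq> carrier M" and R: "finite (carrier R)"
  shows "finite (span S)" and "card (span S) \<le> card (carrier R) ^ card S"
proof -
  have span: "span S = (\<lambda>a. lincomb a S) ` (S \<rightarrow>\<^sub>E carrier R)"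
  proof
    show "span S \<subseteq> (\<lambda>a. lincomb a S) ` (S \<rightarrow>\<^sub>E carrier R)"
    proof
      fix v assume "v \<in> span S"
      then obtain a where a: "a \<in> S \<rightarrow> carrier R" "lincomb a S = v"
        using finite_in_span[OF S] by blast
      have "lincomb (restrict a S) S = v"
        using a by (subst lincomb_cong[of S S _ a]) (use S in auto)
      then show "v \<in> (\<lambda>a. lincomb a S) ` (S \<rightarrow>\<^sub>E carrier R)"
        using a(1) by (intro image_eqI[of _ _ "restrict a S"]) auto
    qed
    show "(\<lambda>a. lincomb a S) ` (S \<rightarrow>\<^sub>E carrier R) \<subseteq> span S"
      using finite_span[OF S] by (auto simp: PiE_iff Pi_iff)
  qed
  have fin: "finite (S \<rightarrow>\<^sub>E carrier R)" using S R by (intro finite_PiE)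
  then show "finite (span S)" unfolding span by (rule finite_imageI)
  have "card (span S) \<le> card (S \<rightarrow>\<^sub>E carrier R)" unfolding span using fin by (rule card_image_le)
  also have "\<dots> = card (carrier R) ^ card S" using S by (simp add: card_PiE)
  finally show "card (span S) \<le> card (carrier R) ^ card S" .
qed

lemma (in vectorspace) subset_span_maximal_lin_indpt:
  assumes T: "T \<subseteq> carrier V" and S: "maximal S (\<lambda>X. X \<subseteq> T \<and> lin_indpt X)"
  shows "T \<subseteq> span S"
proof
  fix v assume v: "v \<in> T"
  have ST: "S \<subseteq> T" "lin_indpt S" using S unfolding maximal_def by auto
  show "v \<in> span S"
  proof (cases "v \<in> S")
    case True
    then show ?thesis using in_own_span ST T by blast
  next
    case False
    then have "\<not> lin_indpt (S \<union> {v})" using S v unfolding maximal_def by blast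
    then show ?thesis using lin_dep_iff_in_span[of S v] ST T v False by auto
  qed
qed

context vec_space
begin

lemma mult_mat_vec_in_span_cols:
  assumes A: "A \<in> carrier_mat n nc" and v: "v \<in> carrier_vec nc"
  shows "A *\<^sub>v v \<in> span (set (cols A))"
proof -
  have cols: "set (cols A) \<subseteq> carrier_vec n" using A cols_dim by blast
  have "vec nc (\<lambda>i. v $ i) = v" using v by auto
  then have "A *\<^sub>v v = lincomb_list (\<lambda>i. v $ i) (cols A)"
    using A cols by (subst lincomb_list_as_mat_mult) auto
  then have "A *\<^sub>v v \<in> span_list (cols A)"
    by (intro in_span_listI) auto
  then show ?thesis using span_list_as_span[OF cols] by simp
qed

lemma card_mult_mat_vec_image_le:
  assumes A: "A \<in> carrier_mat n nc" and X: "X \<subseteq> carrier_vec nc"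
    and fin: "finite (UNIV :: 'a set)"
  shows "card ((\<lambda>v. A *\<^sub>v v) ` X) \<le> card (UNIV :: 'a set) ^ rank A"
proof -
  have cols: "set (cols A) \<subseteq> carrier_vec n" using A cols_dim by blast
  obtain S where S: "maximal S (\<lambda>T. T \<subseteq> set (cols A) \<and> lin_indpt T)"
    using maximal_exists[of "\<lambda>T. T \<subseteq> set (cols A) \<and> lin_indpt T" "card (set (cols A))" "{}"]
    by (meson List.finite_set card_mono empty_iff empty_subsetI finite_lin_indpt2 rev_finite_subset)
  then have SC: "S \<subseteq> carrier_vec n" "finite S"
    using cols finite_subset unfolding maximal_def by auto
  have "(\<lambda>v. A *\<^sub>v v) ` X \<subseteq> span (set (cols A))"
    using mult_mat_vec_in_span_cols[OF A] X by auto
  also have "\<dots> \<subseteq> span S"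
    using span_is_subset[OF subset_span_maximal_lin_indpt[OF cols S]] span_is_submodule[OF SC(1)]
    by simp
  finally have "card ((\<lambda>v. A *\<^sub>v v) ` X) \<le> card (span S)"
    using card_span_le(1)[OF SC(2,1)] fin by (intro card_mono) auto
  also have "\<dots> \<le> card (UNIV :: 'a set) ^ card S" using card_span_le(2)[OF SC(2,1)] fin by simp
  finally show ?thesis using rank_card_indpt[OF A S] by simp
qed

end

lemma card_bool_lists: "card {bs :: bool list. length bs = n} = 2 ^ n"
  using card_lists_length_eq[of "UNIV :: bool set" n] by simp

lemma finite_packets: "finite (packets m t)"
  unfolding packets_def by (intro finite_PiE finite_list_length) simp

definition decodable ::
  "'u set \<Rightarrow> ('u \<Rightarrow> nat) \<Rightarrow> ('u \<Rightarrow> nat set) \<Rightarrow> (nat \<Rightarrow> 'a) set \<Rightarrow> ((nat \<Rightarrow> 'a) \<Rightarrow> 'c) \<Rightarrow> bool" where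
  "decodable U dem side X f \<longleftrightarrow> (\<forall>u\<in>U. \<forall>x\<in>X. \<forall>x'\<in>X.
     f x = f x' \<longrightarrow> restrict x (side u) = restrict x' (side u) \<longrightarrow> x (dem u) = x' (dem u))"

lemma has_index_code_if_decodable:
  fixes f :: "(nat \<Rightarrow> bool list) \<Rightarrow> 'c"
  assumes dec: "decodable U dem side (packets m t) f"
    and card: "card (f ` packets m t) \<le> 2 ^ r"
  shows "has_index_code m U dem side t r"
proof -
  have "card (f ` packets m t) \<le> card {bs :: bool list. length bs = r}"
    using card by (simp add: card_bool_lists)
  then obtain enc :: "'c \<Rightarrow> bool list"
    where enc: "enc ` f ` packets m t \<subseteq> {bs. length bs = r}" "inj_on enc (f ` packets m t)"
    using card_le_inj finite_imageI[OF finite_packets] finite_list_length by metis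
  define phi where "phi x = enc (f x)" for x
  \<comment> \<open>By decodability, any packet tuple consistent with the codeword and the side information
    has the right demanded packet.\<close>
  define psi where "psi u c y =
    (SOME x'. x' \<in> packets m t \<and> phi x' = c \<and> restrict x' (side u) = y) (dem u)" for u c y
  have "is_index_code m U dem side t r phi psi"
    unfolding is_index_code_def
  proof (intro conjI ballI)
    fix x assume "x \<in> packets m t"
    then show "length (phi x) = r" using enc(1) by (auto simp: phi_def)
  next
    fix u x assume u: "u \<in> U" and x: "x \<in> packets m t"
    define P where "P x' \<longleftrightarrow> x' \<in> packets m t \<and> phi x' = phi x \<and> restrict x' (side u) = restrict x (side u)"
      for x'
    define x' where "x' = (SOME x'. P x')"
    have "P x" using x unfolding P_def by blast
    then have "P x'" unfolding x'_def by (rule someI[of P])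
    then have x': "x' \<in> packets m t" "enc (f x') = enc (f x)" "restrict x' (side u) = restrict x (side u)"
      unfolding P_def phi_def by blast+
    then have "f x' = f x" using x inj_onD[OF enc(2)] by blast
    then have "x' (dem u) = x (dem u)" using dec u x x'(1,3) unfolding decodable_def by blast
    then show "psi u (phi x) (restrict x (side u)) = x (dem u)"
      by (simp only: psi_def x'_def P_def)
  qed
  then show ?thesis unfolding has_index_code_def by blast
qed

lemma has_index_code_if_decodable_over_alphabet:
  fixes g :: "(nat \<Rightarrow> 'a::finite) \<Rightarrow> 'c"
  assumes gic: "gic m U dem side"
    and alphabet: "card (UNIV :: 'a set) = 2 ^ s"
    and dec: "decodable U dem side ({..<m} \<rightarrow>\<^sub>E UNIV) g"
    and card: "card (g ` ({..<m} \<rightarrow>\<^sub>E UNIV)) \<le> 2 ^ (s * r)"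
  shows "has_index_code m U dem side s (s * r)"
proof -
  obtain symbol where symbol: "bij_betw symbol {bs :: bool list. length bs = s} (UNIV :: 'a set)"
    using finite_same_card_bij[of "{bs :: bool list. length bs = s}" "UNIV :: 'a set"] alphabet
    by (auto simp: card_bool_lists finite_list_length)
  define symbols where "symbols x = restrict (symbol \<circ> x) {..<m}" for x :: "nat \<Rightarrow> bool list"
  have symbols_range: "symbols ` packets m s \<subseteq> {..<m} \<rightarrow>\<^sub>E UNIV"
    unfolding symbols_def by (intro image_subsetI) (simp only: restrict_PiE_iff, simp)
  have "decodable U dem side (packets m s) (g \<circ> symbols)"
    unfolding decodable_def
  proof (intro ballI impI)
    fix u x x'
    assume u: "u \<in> U" and x: "x \<in> packets m s" and x': "x' \<in> packets m s"
      and "(g \<circ> symbols) x = (g \<circ> symbols) x'" and side: "restrict x (side u) = restrict x' (side u)"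
    have um: "dem u < m" "side u \<subseteq> {..<m}" using gic u by (auto simp: gic_def)
    have "restrict (symbols x) (side u) = restrict (symbols x') (side u)"
      using side um(2) by (auto simp: symbols_def fun_eq_iff restrict_def split: if_splits)
    moreover have "symbols x \<in> {..<m} \<rightarrow>\<^sub>E UNIV" "symbols x' \<in> {..<m} \<rightarrow>\<^sub>E UNIV"
      using symbols_range x x' by auto
    ultimately have "symbols x (dem u) = symbols x' (dem u)"
      using dec u \<open>(g \<circ> symbols) x = (g \<circ> symbols) x'\<close> unfolding decodable_def comp_def by blast
    then have "symbol (x (dem u)) = symbol (x' (dem u))" using um(1) by (simp add: symbols_def)
    moreover have "x (dem u) \<in> {bs. length bs = s}" "x' (dem u) \<in> {bs. length bs = s}"
      using x x' um(1) by (auto simp: packets_def)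
    ultimately show "x (dem u) = x' (dem u)"
      using bij_betw_imp_inj_on[OF symbol] by (auto dest: inj_onD)
  qed
  moreover have "card ((g \<circ> symbols) ` packets m s) \<le> card (g ` ({..<m} \<rightarrow>\<^sub>E UNIV))"
    unfolding image_comp[symmetric] using symbols_range
    by (intro card_mono finite_imageI image_mono finite_PiE) auto
  with card have "card ((g \<circ> symbols) ` packets m s) \<le> 2 ^ (s * r)" by linarith
  ultimately show ?thesis by (rule has_index_code_if_decodable)
qed

lemma broadcast_rate_le:
  assumes "has_index_code m U dem side t r" and "t > 0"
  shows "broadcast_rate m U dem side \<le> real r / real t"
  unfolding broadcast_rate_def using assms
  by (intro cInf_lower bdd_belowI[of _ 0]) auto

lemma coef_matrix_row:
  fixes coef :: "nat \<Rightarrow> nat \<Rightarrow> nat \<Rightarrow> 'f::field"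
  assumes "e < h" and "k < bval dem side (W e)"
  obtains j where "\<And>y. (coef_matrix m dem side h W coef *\<^sub>v vec m y) $ j = (\<Sum>i<m. coef e k i * y i)"
proof -
  define rows where "rows = concat (map (\<lambda>e. map (\<lambda>k. vec m (coef e k)) [0..<bval dem side (W e)]) [0..<h])"
  have "vec m (coef e k) \<in> set rows" unfolding rows_def using assms by (auto intro!: bexI[of _ e])
  then obtain j where j: "j < length rows" "rows ! j = vec m (coef e k)" by (auto simp: in_set_conv_nth)
  have "(coef_matrix m dem side h W coef *\<^sub>v vec m y) $ j = (\<Sum>i<m. coef e k i * y i)" for y
    using j by (simp add: coef_matrix_def rows_def[symmetric] mat_of_rows_row scalar_prod_def lessThan_atLeast0)
  then show thesis by (rule that)
qed

lemma decodable_coef_matrix: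
  fixes coef :: "nat \<Rightarrow> nat \<Rightarrow> nat \<Rightarrow> 'f::field"
  assumes partition: "user_partition m U h W" and valid: "valid_coefs m U dem side h W coef"
  shows "decodable U dem side ({..<m} \<rightarrow>\<^sub>E UNIV) (\<lambda>x. coef_matrix m dem side h W coef *\<^sub>v vec m x)"
  unfolding decodable_def
proof (intro ballI impI)
  let ?N = "coef_matrix m dem side h W coef"
  fix u and x x' :: "nat \<Rightarrow> 'f"
  assume u: "u \<in> U" and x: "x \<in> {..<m} \<rightarrow>\<^sub>E UNIV" and x': "x' \<in> {..<m} \<rightarrow>\<^sub>E UNIV"
    and images: "?N *\<^sub>v vec m x = ?N *\<^sub>v vec m x'"
    and side: "restrict x (side u) = restrict x' (side u)"
  have "u \<in> (\<Union>e<h. W e)" using partition u by (simp add: user_partition_def)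
  then obtain e where e: "e < h" "u \<in> W e" by blast
  let ?combinations = "\<lambda>y. \<lambda>k\<in>{..<bval dem side (W e)}. \<Sum>i<m. coef e k i * y i"
  obtain dec :: "(nat \<Rightarrow> 'f) \<Rightarrow> (nat \<Rightarrow> 'f) \<Rightarrow> 'f"
    where dec: "\<forall>y \<in> {..<m} \<rightarrow>\<^sub>E UNIV. dec (?combinations y) (restrict y (side u)) = y (dem u)"
    using valid[unfolded valid_coefs_def, THEN conjunct2, rule_format, OF e] by blast
  have combinations: "?combinations x = ?combinations x'"
  proof (rule restrict_ext)
    fix k assume "k \<in> {..<bval dem side (W e)}"
    then obtain j
      where row: "\<And>y. (?N *\<^sub>v vec m y) $ j = (\<Sum>i<m. coef e k i * y i)"
      using coef_matrix_row[OF e(1)] by blast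
    have "(?N *\<^sub>v vec m x) $ j = (?N *\<^sub>v vec m x') $ j"
      by (simp only: images)
    then show "(\<Sum>i<m. coef e k i * x i) = (\<Sum>i<m. coef e k i * x' i)" by (simp only: row)
  qed
  have "x (dem u) = dec (?combinations x) (restrict x (side u))" using dec x by simp
  also have "\<dots> = dec (?combinations x') (restrict x' (side u))" by (simp only: combinations side)
  also have "\<dots> = x' (dem u)" using dec x' by simp
  finally show "x (dem u) = x' (dem u)" .
qed

theorem theorem3:
  fixes m :: nat and U :: "'u set" and dem :: "'u \<Rightarrow> nat" and side :: "'u \<Rightarrow> nat set"
    and h :: nat and W :: "nat \<Rightarrow> 'u set"
    and s :: nat and coef :: "nat \<Rightarrow> nat \<Rightarrow> nat \<Rightarrow> 'f::{finite,field}"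
  assumes "gic m U dem side"
    and "user_partition m U h W"
    and "s \<ge> 1" and "card (UNIV :: 'f set) = 2 ^ s"
    and "valid_coefs m U dem side h W coef"
  shows "broadcast_rate m U dem side \<le> real (matrix_rank (coef_matrix m dem side h W coef))"
proof -
  let ?N = "coef_matrix m dem side h W coef"
  let ?r = "matrix_rank ?N"
  have N: "?N \<in> carrier_mat (dim_row ?N) m" by (simp add: coef_matrix_def)
  have "(\<lambda>x. ?N *\<^sub>v vec m x) ` ({..<m} \<rightarrow>\<^sub>E UNIV) = (\<lambda>v. ?N *\<^sub>v v) ` vec m ` ({..<m} \<rightarrow>\<^sub>E UNIV)"
    by (simp only: image_image)
  also have "card \<dots> \<le> card (UNIV :: 'f set) ^ ?r"
    unfolding matrix_rank_def
    by (rule vec_space.card_mult_mat_vec_image_le[OF N image_subsetI[OF vec_carrier] finite_UNIV])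
  also have "\<dots> = 2 ^ (s * ?r)" by (simp only: assms(4) power_mult)
  finally have "card ((\<lambda>x. ?N *\<^sub>v vec m x) ` ({..<m} \<rightarrow>\<^sub>E UNIV)) \<le> 2 ^ (s * ?r)" .
  with assms(1,4) decodable_coef_matrix[OF assms(2,5)]
  have "has_index_code m U dem side s (s * ?r)"
    by (rule has_index_code_if_decodable_over_alphabet)
  then have "broadcast_rate m U dem side \<le> real (s * ?r) / real s"
    by (rule broadcast_rate_le) (use assms(3) in simp)
  also have "\<dots> = real ?r" using assms(3) by simp
  finally show ?thesis .
qed

end
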